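(* Let $L$ be a finite-dimensional Lie algebra over a field $F$. Then $L$ is two-generated if and only if $L/\phi(L)$ is two-generated.
   Context: All Lie algebras are finite-dimensional over an arbitrary field $F$. A Lie algebra is two-generated if it is generated as a Lie algebra by two of its elements. The Frattini subalgebra $F(L)$ of $L$ is the intersection of all maximal subalgebras of $L$, and the Frattini ideal $\phi(L)$ is the largest ideal of $L$ contained in $F(L)$. *)

theory Defs
  imports Main
begin

record ('k, 'v) lie_alg =
  lcarrier :: "'v set"
  lzero :: 'v
  ladd :: "'v \<Rightarrow> 'v \<Rightarrow> 'v"
  lsmult :: "'k \<Rightarrow> 'v \<Rightarrow> 'v"
  lbr :: "'v \<Rightarrow> 'v \<Rightarrow> 'v"

definition lie_algebra :: "('k::field, 'v, 'm) lie_alg_scheme \<Rightarrow> bool" where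
  "lie_algebra L \<longleftrightarrow>
     (let V = lcarrier L; z = lzero L; a = ladd L; s = lsmult L; b = lbr L in
      z \<in> V
    \<and> (\<forall>x\<in>V. \<forall>y\<in>V. a x y \<in> V)
    \<and> (\<forall>c. \<forall>x\<in>V. s c x \<in> V)
    \<and> (\<forall>x\<in>V. \<forall>y\<in>V. b x y \<in> V)
    \<and> (\<forall>x\<in>V. \<forall>y\<in>V. \<forall>w\<in>V. a (a x y) w = a x (a y w))
    \<and> (\<forall>x\<in>V. \<forall>y\<in>V. a x y = a y x)
    \<and> (\<forall>x\<in>V. a z x = x)
    \<and> (\<forall>x\<in>V. \<exists>y\<in>V. a x y = z)
    \<and> (\<forall>c. \<forall>x\<in>V. \<forall>y\<in>V. s c (a x y) = a (s c x) (s c y))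
    \<and> (\<forall>c d. \<forall>x\<in>V. s (c + d) x = a (s c x) (s d x))
    \<and> (\<forall>c d. \<forall>x\<in>V. s (c * d) x = s c (s d x))
    \<and> (\<forall>x\<in>V. s 1 x = x)
    \<and> (\<forall>x\<in>V. \<forall>y\<in>V. \<forall>w\<in>V. b (a x y) w = a (b x w) (b y w))
    \<and> (\<forall>x\<in>V. \<forall>y\<in>V. \<forall>w\<in>V. b w (a x y) = a (b w x) (b w y))
    \<and> (\<forall>c. \<forall>x\<in>V. \<forall>y\<in>V. b (s c x) y = s c (b x y))
    \<and> (\<forall>c. \<forall>x\<in>V. \<forall>y\<in>V. b x (s c y) = s c (b x y))
    \<and> (\<forall>x\<in>V. b x x = z)
    \<and> (\<forall>x\<in>V. \<forall>y\<in>V. \<forall>w\<in>V. a (a (b x (b y w)) (b y (b w x))) (b w (b x y)) = z))"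

inductive_set lspan :: "('k, 'v, 'm) lie_alg_scheme \<Rightarrow> 'v set \<Rightarrow> 'v set"
  for L S where
  span_zero: "lzero L \<in> lspan L S"
| span_base: "x \<in> S \<Longrightarrow> x \<in> lspan L S"
| span_add: "x \<in> lspan L S \<Longrightarrow> y \<in> lspan L S \<Longrightarrow> ladd L x y \<in> lspan L S"
| span_smult: "x \<in> lspan L S \<Longrightarrow> lsmult L c x \<in> lspan L S"

definition finite_dim :: "('k, 'v, 'm) lie_alg_scheme \<Rightarrow> bool" where
  "finite_dim L \<longleftrightarrow> (\<exists>S. finite S \<and> S \<subseteq> lcarrier L \<and> lspan L S = lcarrier L)"

inductive_set lgen :: "('k, 'v, 'm) lie_alg_scheme \<Rightarrow> 'v set \<Rightarrow> 'v set"
  for L S where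
  gen_zero: "lzero L \<in> lgen L S"
| gen_base: "x \<in> S \<Longrightarrow> x \<in> lgen L S"
| gen_add: "x \<in> lgen L S \<Longrightarrow> y \<in> lgen L S \<Longrightarrow> ladd L x y \<in> lgen L S"
| gen_smult: "x \<in> lgen L S \<Longrightarrow> lsmult L c x \<in> lgen L S"
| gen_br: "x \<in> lgen L S \<Longrightarrow> y \<in> lgen L S \<Longrightarrow> lbr L x y \<in> lgen L S"

definition two_generated :: "('k, 'v, 'm) lie_alg_scheme \<Rightarrow> bool" where
  "two_generated L \<longleftrightarrow> (\<exists>x\<in>lcarrier L. \<exists>y\<in>lcarrier L. lgen L {x, y} = lcarrier L)"

definition subspace :: "('k, 'v, 'm) lie_alg_scheme \<Rightarrow> 'v set \<Rightarrow> bool" where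
  "subspace L M \<longleftrightarrow> M \<subseteq> lcarrier L \<and> lzero L \<in> M
     \<and> (\<forall>x\<in>M. \<forall>y\<in>M. ladd L x y \<in> M) \<and> (\<forall>c. \<forall>x\<in>M. lsmult L c x \<in> M)"

definition subalgebra :: "('k, 'v, 'm) lie_alg_scheme \<Rightarrow> 'v set \<Rightarrow> bool" where
  "subalgebra L M \<longleftrightarrow> subspace L M \<and> (\<forall>x\<in>M. \<forall>y\<in>M. lbr L x y \<in> M)"

definition maximal_subalgebra :: "('k, 'v, 'm) lie_alg_scheme \<Rightarrow> 'v set \<Rightarrow> bool" where
  "maximal_subalgebra L M \<longleftrightarrow> subalgebra L M \<and> M \<noteq> lcarrier L
     \<and> (\<forall>N. subalgebra L N \<and> M \<subseteq> N \<longrightarrow> N = M \<or> N = lcarrier L)"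

definition lie_ideal :: "('k, 'v, 'm) lie_alg_scheme \<Rightarrow> 'v set \<Rightarrow> bool" where
  "lie_ideal L I \<longleftrightarrow> subspace L I \<and> (\<forall>x\<in>lcarrier L. \<forall>i\<in>I. lbr L x i \<in> I)"

text \<open>Frattini subalgebra F(L): intersection of all maximal subalgebras
  (equal to L if there are none).\<close>
definition frattini_sub :: "('k, 'v, 'm) lie_alg_scheme \<Rightarrow> 'v set" where
  "frattini_sub L = lcarrier L \<inter> \<Inter> {M. maximal_subalgebra L M}"

definition frattini_ideal :: "('k, 'v, 'm) lie_alg_scheme \<Rightarrow> 'v set" where
  "frattini_ideal L = (GREATEST I. lie_ideal L I \<and> I \<subseteq> frattini_sub L)"

definition lcoset :: "('k, 'v, 'm) lie_alg_scheme \<Rightarrow> 'v set \<Rightarrow> 'v \<Rightarrow> 'v set" where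
  "lcoset L I x = {ladd L x i | i. i \<in> I}"

definition quotient :: "('k, 'v, 'm) lie_alg_scheme \<Rightarrow> 'v set \<Rightarrow> ('k, 'v set) lie_alg" where
  "quotient L I =
    \<lparr> lcarrier = lcoset L I ` lcarrier L,
      lzero = lcoset L I (lzero L),
      ladd = (\<lambda>A B. lcoset L I (ladd L (SOME a. a \<in> A) (SOME b. b \<in> B))),
      lsmult = (\<lambda>c A. lcoset L I (lsmult L c (SOME a. a \<in> A))),
      lbr = (\<lambda>A B. lcoset L I (lbr L (SOME a. a \<in> A) (SOME b. b \<in> B))) \<rparr>"

end

theory Submission
  imports Defs
begin

text \<open>The canonical map \<open>x \<mapsto> x + \<phi>(L)\<close> is a surjective homomorphism, so generators of \<open>L\<close>
  map to generators of \<open>L/\<phi>(L)\<close>. Conversely, if \<open>x + \<phi>(L)\<close> and \<open>y + \<phi>(L)\<close> generate \<open>L/\<phi>(L)\<close>,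
  the subalgebra \<open>S\<close> generated by \<open>x, y\<close> satisfies \<open>S + \<phi>(L) = L\<close>. If \<open>S\<close> were proper it would
  lie in a maximal subalgebra \<open>M\<close> (finite dimension makes Zorn's lemma applicable), and
  \<open>\<phi>(L) \<subseteq> F(L) \<subseteq> M\<close> would force \<open>L = S + \<phi>(L) \<subseteq> M\<close>.\<close>

definition lie_hom ::
    "('k, 'v, 'm) lie_alg_scheme \<Rightarrow> ('k, 'w, 'n) lie_alg_scheme \<Rightarrow> ('v \<Rightarrow> 'w) \<Rightarrow> bool" where
  "lie_hom L L' f \<longleftrightarrow>
     f ` lcarrier L \<subseteq> lcarrier L' \<and> f (lzero L) = lzero L'
   \<and> (\<forall>a\<in>lcarrier L. \<forall>b\<in>lcarrier L. f (ladd L a b) = ladd L' (f a) (f b))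
   \<and> (\<forall>c. \<forall>a\<in>lcarrier L. f (lsmult L c a) = lsmult L' c (f a))
   \<and> (\<forall>a\<in>lcarrier L. \<forall>b\<in>lcarrier L. f (lbr L a b) = lbr L' (f a) (f b))"

locale lie =
  fixes L :: "('k::field, 'v, 'm) lie_alg_scheme"
  assumes lie_algebra: "lie_algebra L"
begin

abbreviation V where "V \<equiv> lcarrier L"
abbreviation zero ("\<zero>") where "\<zero> \<equiv> lzero L"
abbreviation add (infixl "\<oplus>" 65) where "add \<equiv> ladd L"
abbreviation smult (infixr "\<odot>" 70) where "smult \<equiv> lsmult L"
abbreviation br where "br \<equiv> lbr L"

lemma
  shows zero_closed [simp]: "\<zero> \<in> V"
    and add_closed [simp]: "x \<in> V \<Longrightarrow> y \<in> V \<Longrightarrow> x \<oplus> y \<in> V"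
    and smult_closed [simp]: "x \<in> V \<Longrightarrow> c \<odot> x \<in> V"
    and br_closed [simp]: "x \<in> V \<Longrightarrow> y \<in> V \<Longrightarrow> br x y \<in> V"
    and add_assoc: "x \<in> V \<Longrightarrow> y \<in> V \<Longrightarrow> w \<in> V \<Longrightarrow> x \<oplus> y \<oplus> w = x \<oplus> (y \<oplus> w)"
    and add_commute: "x \<in> V \<Longrightarrow> y \<in> V \<Longrightarrow> x \<oplus> y = y \<oplus> x"
    and zero_add [simp]: "x \<in> V \<Longrightarrow> \<zero> \<oplus> x = x"
    and smult_add_right: "x \<in> V \<Longrightarrow> y \<in> V \<Longrightarrow> c \<odot> (x \<oplus> y) = c \<odot> x \<oplus> c \<odot> y"
    and smult_add_left: "x \<in> V \<Longrightarrow> (c + d) \<odot> x = c \<odot> x \<oplus> d \<odot> x"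
    and smult_one [simp]: "x \<in> V \<Longrightarrow> 1 \<odot> x = x"
    and br_add_left: "x \<in> V \<Longrightarrow> y \<in> V \<Longrightarrow> w \<in> V \<Longrightarrow> br (x \<oplus> y) w = br x w \<oplus> br y w"
    and br_add_right: "x \<in> V \<Longrightarrow> y \<in> V \<Longrightarrow> w \<in> V \<Longrightarrow> br w (x \<oplus> y) = br w x \<oplus> br w y"
    and br_smult_right: "x \<in> V \<Longrightarrow> y \<in> V \<Longrightarrow> br x (c \<odot> y) = c \<odot> br x y"
    and br_self [simp]: "x \<in> V \<Longrightarrow> br x x = \<zero>"
  using lie_algebra unfolding lie_algebra_def Let_def by auto

lemma add_inverse_ex: "x \<in> V \<Longrightarrow> \<exists>y\<in>V. x \<oplus> y = \<zero>"
  using lie_algebra unfolding lie_algebra_def Let_def by meson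

lemma add_zero [simp]: "x \<in> V \<Longrightarrow> x \<oplus> \<zero> = x"
  using add_commute[of x \<zero>] by simp

lemma add_left_cancel:
  assumes "x \<in> V" "y \<in> V" "w \<in> V" and "x \<oplus> y = x \<oplus> w"
  shows "y = w"
proof -
  obtain n where n: "n \<in> V" "x \<oplus> n = \<zero>" using add_inverse_ex assms(1) by blast
  have "n \<oplus> x \<oplus> y = n \<oplus> x \<oplus> w" using assms n by (simp add: add_assoc)
  then show ?thesis using assms n by (simp add: add_commute[of n x])
qed

lemma smult_zero_left [simp]: "x \<in> V \<Longrightarrow> 0 \<odot> x = \<zero>"
  using add_left_cancel[of "0 \<odot> x" "0 \<odot> x" \<zero>] smult_add_left[of x 0 0] by simp

lemma add_neg [simp]: "x \<in> V \<Longrightarrow> x \<oplus> (-1) \<odot> x = \<zero>"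
  using smult_add_left[of x 1 "-1"] by simp

lemma br_zero_right [simp]: "x \<in> V \<Longrightarrow> br x \<zero> = \<zero>"
  using add_left_cancel[of "br x \<zero>" "br x \<zero>" \<zero>] br_add_right[of \<zero> \<zero> x] by simp

lemma br_antisym:
  assumes "x \<in> V" "y \<in> V"
  shows "br y x = (-1) \<odot> br x y"
proof (rule add_left_cancel[of "br x y"])
  have "\<zero> = br (x \<oplus> y) (x \<oplus> y)" using assms by simp
  also have "\<dots> = br x y \<oplus> br y x"
    using assms
    by (simp add: br_add_left br_add_right br_self[of x] br_self[of y] add_commute[of "br y x"]
        del: br_self)
  finally show "br x y \<oplus> br y x = br x y \<oplus> (-1) \<odot> br x y" using assms by simp
qed (use assms in simp_all)

lemma add_middle_swap:
  assumes "a \<in> V" "b \<in> V" "c \<in> V" "d \<in> V"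
  shows "a \<oplus> b \<oplus> (c \<oplus> d) = a \<oplus> c \<oplus> (b \<oplus> d)"
  using assms by (simp add: add_assoc add_commute[of b "c \<oplus> d"] add_commute[of b d])

lemma subspace_subset: "subspace L I \<Longrightarrow> I \<subseteq> V"
  unfolding subspace_def by blast

lemma lcoset_self: "subspace L I \<Longrightarrow> a \<in> V \<Longrightarrow> a \<in> lcoset L I a"
  unfolding lcoset_def subspace_def by (metis (mono_tags, lifting) add_zero mem_Collect_eq)

lemma lcoset_add:
  assumes I: "subspace L I" and a: "a \<in> V" and i: "i \<in> I"
  shows "lcoset L I (a \<oplus> i) = lcoset L I a"
proof -
  have iV: "i \<in> V" using I i subspace_subset by blast
  have shift: "a \<oplus> i \<oplus> j = a \<oplus> (i \<oplus> j)" if "j \<in> I" for j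
    using a iV that subspace_subset[OF I] by (blast intro: add_assoc)
  have unshift: "a \<oplus> k = a \<oplus> i \<oplus> ((-1) \<odot> i \<oplus> k)" if "k \<in> I" for k
  proof -
    have kV: "k \<in> V" using that I subspace_subset by blast
    have "a \<oplus> i \<oplus> ((-1) \<odot> i \<oplus> k) = a \<oplus> (i \<oplus> (-1) \<odot> i \<oplus> k)"
      using a iV kV by (simp add: add_assoc del: add_neg)
    also have "\<dots> = a \<oplus> k" using iV kV by simp
    finally show ?thesis by simp
  qed
  have closed: "i \<oplus> j \<in> I" "(-1) \<odot> i \<oplus> j \<in> I" if "j \<in> I" for j
    using I i that unfolding subspace_def by blast+
  show ?thesis
    unfolding lcoset_def using shift unshift closed by blast
qed

lemma lcoset_eq_imp_add:
  assumes "subspace L I" "a \<in> V" "lcoset L I a = lcoset L I b"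
  shows "\<exists>i\<in>I. a = b \<oplus> i"
  using lcoset_self[OF assms(1,2)] assms(3) unfolding lcoset_def by blast

lemma supplement_if_lcoset_image_eq:
  assumes I: "subspace L I" and S: "lcoset L I ` S = lcoset L I ` V"
  shows "\<forall>w\<in>V. \<exists>s\<in>S. \<exists>i\<in>I. w = s \<oplus> i"
proof
  fix w assume w: "w \<in> V"
  then obtain s where "s \<in> S" "lcoset L I w = lcoset L I s" using S by (metis imageE imageI)
  then show "\<exists>s\<in>S. \<exists>i\<in>I. w = s \<oplus> i" using lcoset_eq_imp_add[OF I w] by blast
qed

lemma some_lcoset:
  assumes "subspace L I" "a \<in> V"
  obtains i where "i \<in> I" "(SOME p. p \<in> lcoset L I a) = a \<oplus> i"
proof -
  have "(SOME p. p \<in> lcoset L I a) \<in> lcoset L I a"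
    using lcoset_self[OF assms] by (rule someI)
  then show ?thesis using that unfolding lcoset_def by blast
qed

text \<open>The quotient operations are applied to representatives picked by \<open>SOME\<close>; the choice is
  irrelevant because a coset absorbs every element of \<open>I\<close>.\<close>

lemma quotient_ladd:
  assumes I: "subspace L I" and a: "a \<in> V" and b: "b \<in> V"
  shows "ladd (quotient L I) (lcoset L I a) (lcoset L I b) = lcoset L I (a \<oplus> b)"
proof -
  obtain i j where i: "i \<in> I" "(SOME p. p \<in> lcoset L I a) = a \<oplus> i"
    and j: "j \<in> I" "(SOME p. p \<in> lcoset L I b) = b \<oplus> j"
    using some_lcoset[OF I a] some_lcoset[OF I b] by metis
  have iV: "i \<in> V" and jV: "j \<in> V" using i j subspace_subset[OF I] by auto
  have "ladd (quotient L I) (lcoset L I a) (lcoset L I b) = lcoset L I (a \<oplus> i \<oplus> (b \<oplus> j))"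
    using i j by (simp add: quotient_def)
  also have "\<dots> = lcoset L I (a \<oplus> b \<oplus> (i \<oplus> j))"
    using a b iV jV by (simp add: add_middle_swap)
  also have "\<dots> = lcoset L I (a \<oplus> b)"
    using I a b i j by (simp add: lcoset_add subspace_def)
  finally show ?thesis .
qed

lemma quotient_lsmult:
  assumes I: "subspace L I" and a: "a \<in> V"
  shows "lsmult (quotient L I) c (lcoset L I a) = lcoset L I (c \<odot> a)"
proof -
  obtain i where i: "i \<in> I" "(SOME p. p \<in> lcoset L I a) = a \<oplus> i"
    using some_lcoset[OF I a] by metis
  have "lsmult (quotient L I) c (lcoset L I a) = lcoset L I (c \<odot> a \<oplus> c \<odot> i)"
    using i a subspace_subset[OF I] by (auto simp: quotient_def smult_add_right)
  also have "\<dots> = lcoset L I (c \<odot> a)"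
    using I a i by (simp add: lcoset_add subspace_def)
  finally show ?thesis .
qed

lemma quotient_lbr:
  assumes I: "lie_ideal L I" and a: "a \<in> V" and b: "b \<in> V"
  shows "lbr (quotient L I) (lcoset L I a) (lcoset L I b) = lcoset L I (br a b)"
proof -
  have S: "subspace L I" and absorb: "\<And>x i. x \<in> V \<Longrightarrow> i \<in> I \<Longrightarrow> br x i \<in> I"
    using I unfolding lie_ideal_def by blast+
  obtain i j where i: "i \<in> I" "(SOME p. p \<in> lcoset L I a) = a \<oplus> i"
    and j: "j \<in> I" "(SOME p. p \<in> lcoset L I b) = b \<oplus> j"
    using some_lcoset[OF S a] some_lcoset[OF S b] by metis
  have iV: "i \<in> V" and jV: "j \<in> V" using i j subspace_subset[OF S] by auto
  have "br (a \<oplus> i) (b \<oplus> j) = br a b \<oplus> (br a j \<oplus> br i (b \<oplus> j))"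
    using a b iV jV by (simp add: br_add_left[of a i] br_add_right[of b j a] add_assoc)
  moreover have "br i (b \<oplus> j) \<in> I"
    using S b jV i absorb[of "b \<oplus> j" i] br_antisym[of "b \<oplus> j" i] iV
    unfolding subspace_def by simp
  then have "br a j \<oplus> br i (b \<oplus> j) \<in> I"
    using S a j absorb unfolding subspace_def by blast
  ultimately have "lcoset L I (br (a \<oplus> i) (b \<oplus> j)) = lcoset L I (br a b)"
    using S a b by (simp add: lcoset_add)
  then show ?thesis using i j by (simp add: quotient_def)
qed

lemma lie_hom_lcoset:
  assumes "lie_ideal L I"
  shows "lie_hom L (quotient L I) (lcoset L I)"
proof -
  have "subspace L I" using assms unfolding lie_ideal_def by blast
  with assms show ?thesis
    unfolding lie_hom_def by (simp add: quotient_ladd quotient_lsmult quotient_lbr) (simp add: quotient_def)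
qed

lemma lgen_subset_carrier:
  assumes "S \<subseteq> V"
  shows "lgen L S \<subseteq> V"
proof
  fix x assume "x \<in> lgen L S"
  then show "x \<in> V" by induction (use assms in auto)
qed

lemma subalgebra_lgen: "S \<subseteq> V \<Longrightarrow> subalgebra L (lgen L S)"
  using lgen_subset_carrier unfolding subalgebra_def subspace_def by (auto intro: lgen.intros)

lemma lie_homD:
  assumes "lie_hom L L' f"
  shows "f \<zero> = lzero L'"
    and "a \<in> V \<Longrightarrow> b \<in> V \<Longrightarrow> f (a \<oplus> b) = ladd L' (f a) (f b)"
    and "a \<in> V \<Longrightarrow> f (c \<odot> a) = lsmult L' c (f a)"
    and "a \<in> V \<Longrightarrow> b \<in> V \<Longrightarrow> f (br a b) = lbr L' (f a) (f b)"
  using assms unfolding lie_hom_def by auto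

lemma lgen_image_subset:
  assumes hom: "lie_hom L L' f" and S: "S \<subseteq> V"
  shows "lgen L' (f ` S) \<subseteq> f ` lgen L S"
proof
  have gen: "lgen L S \<subseteq> V" using lgen_subset_carrier[OF S] .
  fix y assume "y \<in> lgen L' (f ` S)"
  then show "y \<in> f ` lgen L S"
  proof (induction rule: lgen.induct)
    case gen_zero
    show ?case using lie_homD(1)[OF hom] lgen.gen_zero by (metis imageI)
  next
    case (gen_base y)
    then show ?case by (auto intro: lgen.gen_base)
  next
    case (gen_add y y')
    then obtain a b where "a \<in> lgen L S" "b \<in> lgen L S" "y = f a" "y' = f b" by blast
    moreover from this have "ladd L' y y' = f (a \<oplus> b)"
      using gen lie_homD(2)[OF hom] by (metis subsetD)
    ultimately show ?case by (blast intro: lgen.gen_add)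
  next
    case (gen_smult y c)
    then obtain a where "a \<in> lgen L S" "y = f a" by blast
    moreover from this have "lsmult L' c y = f (c \<odot> a)"
      using gen lie_homD(3)[OF hom] by (metis subsetD)
    ultimately show ?case by (blast intro: lgen.gen_smult)
  next
    case (gen_br y y')
    then obtain a b where "a \<in> lgen L S" "b \<in> lgen L S" "y = f a" "y' = f b" by blast
    moreover from this have "lbr L' y y' = f (br a b)"
      using gen lie_homD(4)[OF hom] by (metis subsetD)
    ultimately show ?case by (blast intro: lgen.gen_br)
  qed
qed

lemma image_lgen_subset:
  assumes hom: "lie_hom L L' f" and S: "S \<subseteq> V"
  shows "f ` lgen L S \<subseteq> lgen L' (f ` S)"
proof -
  have gen: "lgen L S \<subseteq> V" using lgen_subset_carrier[OF S] .
  have "f x \<in> lgen L' (f ` S)" if "x \<in> lgen L S" for x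
    using that
  proof (induction rule: lgen.induct)
    case (gen_add a b)
    then show ?case using gen lie_homD(2)[OF hom] by (metis subsetD lgen.gen_add)
  next
    case (gen_smult a c)
    then show ?case using gen lie_homD(3)[OF hom] by (metis subsetD lgen.gen_smult)
  next
    case (gen_br a b)
    then show ?case using gen lie_homD(4)[OF hom] by (metis subsetD lgen.gen_br)
  qed (auto simp: lie_homD(1)[OF hom] intro: lgen.intros)
  then show ?thesis by blast
qed

lemma lgen_image: "lie_hom L L' f \<Longrightarrow> S \<subseteq> V \<Longrightarrow> lgen L' (f ` S) = f ` lgen L S"
  using lgen_image_subset image_lgen_subset by (rule subset_antisym)

lemma two_generated_image:
  assumes "lie_hom L L' f" "f ` V = lcarrier L'" "two_generated L"
  shows "two_generated L'"
proof -
  obtain x y where xy: "x \<in> V" "y \<in> V" "lgen L {x, y} = V"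
    using assms(3) unfolding two_generated_def by blast
  then have "lgen L' {f x, f y} = lcarrier L'"
    using lgen_image[OF assms(1), of "{x, y}"] assms(2) by simp
  then show ?thesis using xy assms(2) unfolding two_generated_def by blast
qed

lemma lspan_least:
  assumes "subspace L M" "S \<subseteq> M"
  shows "lspan L S \<subseteq> M"
proof
  fix x assume "x \<in> lspan L S"
  then show "x \<in> M" by induction (use assms in \<open>auto simp: subspace_def\<close>)
qed

lemma subspace_carrier: "subspace L V"
  unfolding subspace_def by simp

lemma subspace_lspan: "S \<subseteq> V \<Longrightarrow> subspace L (lspan L S)"
  using lspan_least[OF subspace_carrier] unfolding subspace_def by (auto intro: lspan.intros)

lemma lie_ideal_lspan_Union:
  assumes ideals: "\<And>I. I \<in> \<I> \<Longrightarrow> lie_ideal L I"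
  shows "lie_ideal L (lspan L (\<Union>\<I>))"
proof -
  have U: "\<Union>\<I> \<subseteq> V" using ideals unfolding lie_ideal_def subspace_def by blast
  have J: "lspan L (\<Union>\<I>) \<subseteq> V" using lspan_least[OF subspace_carrier U] .
  have "br x y \<in> lspan L (\<Union>\<I>)" if x: "x \<in> V" and "y \<in> lspan L (\<Union>\<I>)" for x y
    using that(2)
  proof (induction rule: lspan.induct)
    case span_zero
    then show ?case using x by (simp add: lspan.span_zero)
  next
    case (span_base y)
    then obtain I where "I \<in> \<I>" "y \<in> I" by blast
    then have "br x y \<in> \<Union>\<I>" using x ideals unfolding lie_ideal_def by blast
    then show ?case by (rule lspan.span_base)
  next
    case (span_add a b)
    have "a \<in> V" "b \<in> V" using span_add.hyps J by auto
    then show ?case using x span_add.IH by (simp add: br_add_right lspan.span_add)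
  next
    case (span_smult a c)
    have "a \<in> V" using span_smult.hyps J by auto
    then show ?case using x span_smult.IH by (simp add: br_smult_right lspan.span_smult)
  qed
  then show ?thesis using subspace_lspan[OF U] unfolding lie_ideal_def by blast
qed

lemma subspace_frattini_sub: "subspace L (frattini_sub L)"
  unfolding frattini_sub_def subspace_def maximal_subalgebra_def subalgebra_def by auto

lemma
  shows lie_ideal_frattini_ideal: "lie_ideal L (frattini_ideal L)"
    and frattini_ideal_subset: "frattini_ideal L \<subseteq> frattini_sub L"
proof -
  define P where "P I \<longleftrightarrow> lie_ideal L I \<and> I \<subseteq> frattini_sub L" for I
  define J where "J = lspan L (\<Union>{I. P I})"
  have "P J"
    unfolding P_def J_def
    using lie_ideal_lspan_Union[of "{I. P I}"] lspan_least[OF subspace_frattini_sub, of "\<Union>{I. P I}"]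
    by (auto simp: P_def)
  moreover have "I \<subseteq> J" if "P I" for I
    using that unfolding J_def by (auto intro: lspan.span_base)
  ultimately have "frattini_ideal L = J"
    unfolding frattini_ideal_def P_def[symmetric] by (intro Greatest_equality) auto
  with \<open>P J\<close> show "lie_ideal L (frattini_ideal L)" "frattini_ideal L \<subseteq> frattini_sub L"
    unfolding P_def by auto
qed

lemma subalgebra_Union_chain:
  assumes "\<C> \<noteq> {}" and "subset.chain {N. subalgebra L N} \<C>"
  shows "subalgebra L (\<Union>\<C>)"
proof -
  have sub: "\<And>N. N \<in> \<C> \<Longrightarrow> subalgebra L N"
    and chain: "\<forall>X\<in>\<C>. \<forall>Y\<in>\<C>. X \<subseteq> Y \<or> Y \<subseteq> X"
    using assms(2) unfolding subset_chain_def by auto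
  have common: "\<exists>N\<in>\<C>. x \<in> N \<and> y \<in> N" if "x \<in> \<Union>\<C>" "y \<in> \<Union>\<C>" for x y
    using that chain by blast
  show ?thesis
    unfolding subalgebra_def subspace_def
  proof (intro conjI ballI allI)
    show "\<Union>\<C> \<subseteq> V" "\<zero> \<in> \<Union>\<C>"
      using sub assms(1) unfolding subalgebra_def subspace_def by blast+
    fix x y assume "x \<in> \<Union>\<C>" "y \<in> \<Union>\<C>"
    then obtain N where "N \<in> \<C>" "x \<in> N" "y \<in> N" using common by blast
    then show "x \<oplus> y \<in> \<Union>\<C>" "br x y \<in> \<Union>\<C>"
      using sub[of N] unfolding subalgebra_def subspace_def by blast+
  next
    fix c x assume "x \<in> \<Union>\<C>"
    then obtain N where "N \<in> \<C>" "x \<in> N" by blast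
    then show "c \<odot> x \<in> \<Union>\<C>" using sub[of N] unfolding subalgebra_def subspace_def by blast
  qed
qed

text \<open>Finite dimension is what keeps the union of a chain of proper subalgebras proper:
  a finite spanning set of \<open>L\<close> would already lie in one member of the chain.\<close>

lemma maximal_subalgebra_exists:
  assumes fd: "finite_dim L" and S: "subalgebra L S" "S \<noteq> V"
  shows "\<exists>M. maximal_subalgebra L M \<and> S \<subseteq> M"
proof -
  define \<A> where "\<A> = {N. subalgebra L N \<and> S \<subseteq> N \<and> N \<noteq> V}"
  obtain B where B: "finite B" "B \<subseteq> V" "lspan L B = V"
    using fd unfolding finite_dim_def by blast
  have "\<exists>M\<in>\<A>. \<forall>X\<in>\<A>. M \<subseteq> X \<longrightarrow> X = M"
  proof (rule subset_Zorn_nonempty)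
    show "\<A> \<noteq> {}" using S unfolding \<A>_def by blast
  next
    fix \<C> assume \<C>: "\<C> \<noteq> {}" "subset.chain \<A> \<C>"
    then have "subset.chain {N. subalgebra L N} \<C>"
      unfolding subset_chain_def \<A>_def by blast
    then have sub: "subalgebra L (\<Union>\<C>)" using subalgebra_Union_chain \<C>(1) by blast
    have "\<Union>\<C> \<noteq> V"
    proof
      assume "\<Union>\<C> = V"
      then obtain N where N: "N \<in> \<C>" "B \<subseteq> N"
        using finite_subset_Union_chain[OF B(1) _ \<C>] B(2) by blast
      then have "subalgebra L N" "N \<noteq> V" using \<C>(2) unfolding subset_chain_def \<A>_def by auto
      moreover have "lspan L B \<subseteq> N"
        using lspan_least N(2) \<open>subalgebra L N\<close> unfolding subalgebra_def by blast
      ultimately show False using B(3) unfolding subalgebra_def subspace_def by blast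
    qed
    then show "\<Union>\<C> \<in> \<A>"
      using sub \<C> unfolding \<A>_def subset_chain_def by blast
  qed
  then obtain M where "M \<in> \<A>" "\<forall>X\<in>\<A>. M \<subseteq> X \<longrightarrow> X = M" by blast
  then have "maximal_subalgebra L M \<and> S \<subseteq> M"
    unfolding maximal_subalgebra_def \<A>_def by blast
  then show ?thesis by blast
qed

lemma subalgebra_eq_carrier_if_frattini_supplement:
  assumes fd: "finite_dim L" and S: "subalgebra L S" and P: "P \<subseteq> frattini_sub L"
    and supplement: "\<forall>w\<in>V. \<exists>s\<in>S. \<exists>p\<in>P. w = s \<oplus> p"
  shows "S = V"
proof (rule ccontr)
  assume "S \<noteq> V"
  then obtain M where M: "maximal_subalgebra L M" "S \<subseteq> M"
    using maximal_subalgebra_exists[OF fd S] by blast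
  have "P \<subseteq> M" using M(1) P unfolding frattini_sub_def by blast
  moreover have M_sub: "subspace L M"
    using M(1) unfolding maximal_subalgebra_def subalgebra_def by blast
  ultimately have "V \<subseteq> M"
    using supplement M(2) unfolding subspace_def by (metis subsetD subsetI)
  moreover have "M \<noteq> V" using M(1) unfolding maximal_subalgebra_def by blast
  ultimately show False using subspace_subset[OF M_sub] by blast
qed

end

theorem lemma2p1:
  fixes L :: "('k::field, 'v) lie_alg"
  assumes "lie_algebra L" and "finite_dim L"
  shows "two_generated L \<longleftrightarrow> two_generated (quotient L (frattini_ideal L))"
proof -
  interpret lie L by (rule lie.intro) (rule assms(1))
  let ?\<Phi> = "frattini_ideal L"
  let ?Q = "quotient L ?\<Phi>" and ?c = "lcoset L ?\<Phi>"
  have hom: "lie_hom L ?Q ?c" using lie_ideal_frattini_ideal by (rule lie_hom_lcoset)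
  have onto: "?c ` V = lcarrier ?Q" by (simp add: quotient_def)
  have \<Phi>: "subspace L ?\<Phi>" using lie_ideal_frattini_ideal unfolding lie_ideal_def by blast
  show ?thesis
  proof
    assume "two_generated L"
    then show "two_generated ?Q" using two_generated_image[OF hom onto] by blast
  next
    assume "two_generated ?Q"
    then obtain x y where xy: "x \<in> V" "y \<in> V" "lgen ?Q {?c x, ?c y} = lcarrier ?Q"
      unfolding two_generated_def onto[symmetric] by blast
    let ?S = "lgen L {x, y}"
    have "?c ` ?S = ?c ` V" using lgen_image[OF hom, of "{x, y}"] xy onto by simp
    then have "\<forall>w\<in>V. \<exists>s\<in>?S. \<exists>p\<in>?\<Phi>. w = s \<oplus> p"
      by (rule supplement_if_lcoset_image_eq[OF \<Phi>])
    moreover have "subalgebra L ?S" using xy(1,2) by (simp add: subalgebra_lgen)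
    ultimately have "?S = V"
      using subalgebra_eq_carrier_if_frattini_supplement[OF assms(2) _ frattini_ideal_subset] by blast
    then show "two_generated L" using xy(1,2) unfolding two_generated_def by blast
  qed
qed

end
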